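(* Let $\alpha\ge-1/2$, $a\ge1$, $u_j(x)=x^{aj}$, $j=1,2,\dots$. Then there is $C$ independent of $j$ such that for all $j\ge1$ and all $f\in L^2(\mathbb{R}_+,d\mu_\alpha)$, \[ \int_0^\infty|j\,u_j\mathcal{T}^{\alpha+aj}(u_j^{-1}f)(x)|^2d\mu_\alpha(x)\le C\int_0^\infty|f(x)|^2d\mu_\alpha(x). \]
   Context: For $\alpha>-1$, $d\mu_\alpha(x)=x^{2\alpha+1}dx$ on $\mathbb{R}_+$, $\langle f,g\rangle_{d\mu_\alpha}=\int_0^\infty f\bar g\,d\mu_\alpha$. Laguerre functions $\ell_k^\alpha(x)=\big(\tfrac{2\Gamma(k+1)}{\Gamma(k+\alpha+1)}\big)^{1/2}L_k^\alpha(x^2)e^{-x^2/2}$ (orthonormal basis of $L^2(\mathbb{R}_+,d\mu_\alpha)$). $L_\alpha^{-1/2}f=\sum_{k\ge0}(4k+2\alpha+2)^{-1/2}\langle f,\ell_k^\alpha\rangle_{d\mu_\alpha}\ell_k^\alpha$ and $\mathcal{T}^\alpha f(x)=\frac1xL_\alpha^{-1/2}f(x)$. *)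

theory Defs
  imports "HOL-Analysis.Analysis"
begin

definition mu :: "real \<Rightarrow> real measure" where
  "mu \<alpha> = density lborel (\<lambda>x. ennreal (indicator {0<..} x * x powr (2 * \<alpha> + 1)))"

definition L2 :: "real measure \<Rightarrow> (real \<Rightarrow> complex) set" where
  "L2 M = {f. f \<in> borel_measurable M \<and> (\<integral>\<^sup>+ x. ennreal ((cmod (f x))\<^sup>2) \<partial>M) < \<infinity>}"

definition laguerre_poly :: "real \<Rightarrow> nat \<Rightarrow> real \<Rightarrow> real" where
  "laguerre_poly \<alpha> k x = (\<Sum>i\<le>k. (-1) ^ i * ((real k + \<alpha>) gchoose (k - i)) * x ^ i / fact i)"

definition laguerre_fun :: "real \<Rightarrow> nat \<Rightarrow> real \<Rightarrow> real" where
  "laguerre_fun \<alpha> k x =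
     sqrt (2 * Gamma (real k + 1) / Gamma (real k + \<alpha> + 1)) * laguerre_poly \<alpha> k (x\<^sup>2) * exp (- (x\<^sup>2) / 2)"

definition lag_coeff :: "real \<Rightarrow> (real \<Rightarrow> complex) \<Rightarrow> nat \<Rightarrow> complex" where
  "lag_coeff \<alpha> f k = (\<integral> x. f x * cnj (complex_of_real (laguerre_fun \<alpha> k x)) \<partial>mu \<alpha>)"

definition Linv_partial :: "real \<Rightarrow> (real \<Rightarrow> complex) \<Rightarrow> nat \<Rightarrow> real \<Rightarrow> complex" where
  "Linv_partial \<alpha> f n x =
     (\<Sum>k<n. complex_of_real ((4 * real k + 2 * \<alpha> + 2) powr (-1/2)) * lag_coeff \<alpha> f k
              * complex_of_real (laguerre_fun \<alpha> k x))"

definition Linv :: "real \<Rightarrow> (real \<Rightarrow> complex) \<Rightarrow> real \<Rightarrow> complex" where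
  "Linv \<alpha> f = (SOME g. g \<in> borel_measurable (mu \<alpha>) \<and>
       (\<lambda>n. \<integral>\<^sup>+ x. ennreal ((cmod (Linv_partial \<alpha> f n x - g x))\<^sup>2) \<partial>mu \<alpha>) \<longlonglongrightarrow> 0)"

definition Top :: "real \<Rightarrow> (real \<Rightarrow> complex) \<Rightarrow> real \<Rightarrow> complex" where
  "Top \<alpha> f x = Linv \<alpha> f x / complex_of_real x"

end

theory Submission
  imports Defs "HOL-Computational_Algebra.Polynomial" "HOL-Computational_Algebra.Formal_Power_Series"
begin

text \<open>Put b = alpha + a j and g = f / x^(a j). Multiplication by x^(a j) maps L^2(d mu_b)
  isometrically onto L^2(d mu_alpha), so the claim follows from the weighted estimate
  b^2 * int |L_b^(-1/2) g|^2 / x^2 d mu_b <= int |g|^2 d mu_b, with constant j^2 / b^2 <= 4.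

  For f = P(x^2) exp(-x^2/2) every integral against d mu_b is a value of the functional
  gamma_moment on polynomials. There the estimate for a finite Laguerre expansion is a Hardy
  inequality b^2 int |f|^2 / x^2 d mu_b <= <L_b f, f>, obtained from integration by parts and
  Cauchy-Schwarz. For the partial sums of L_b^(-1/2) g the right-hand side is bounded by Bessel's
  inequality, and Fatou's lemma along an a.e. convergent subsequence passes to the L^2 limit, whose
  existence is the completeness of L^2.\<close>

section \<open>Gaussian moments\<close>

lemma tendsto_nn_integral_indicator_Icc:
  fixes f :: "real \<Rightarrow> real" and u :: "nat \<Rightarrow> real"
  assumes [measurable]: "f \<in> borel_measurable borel"
    and "incseq u" and "filterlim u at_top sequentially"
  shows "(\<lambda>n. \<integral>\<^sup>+x. ennreal (f x * indicator {0..u n} x) \<partial>lborel)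
           \<longlonglongrightarrow> (\<integral>\<^sup>+x. ennreal (f x * indicator {0..} x) \<partial>lborel)"
proof (rule nn_integral_LIMSEQ)
  show "incseq (\<lambda>n x. ennreal (f x * indicator {0..u n} x))"
    using \<open>incseq u\<close> unfolding incseq_def le_fun_def
    by (auto split: split_indicator dest: order_trans)
  show "(\<lambda>n. ennreal (f x * indicator {0..u n} x)) \<longlonglongrightarrow> ennreal (f x * indicator {0..} x)" for x
  proof (rule tendsto_eventually)
    have "\<forall>\<^sub>F n in sequentially. x \<le> u n"
      using \<open>filterlim u at_top sequentially\<close> by (simp add: filterlim_at_top)
    then show "\<forall>\<^sub>F n in sequentially.
        ennreal (f x * indicator {0..u n} x) = ennreal (f x * indicator {0..} x)"
      by eventually_elim (auto split: split_indicator)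
  qed
qed simp

lemma nn_integral_gaussian_moment:
  fixes s :: real
  assumes "s > -1"
  shows "(\<integral>\<^sup>+x. ennreal (indicator {0..} x * x powr (2 * s + 1) * exp (- x\<^sup>2)) \<partial>lborel)
           = ennreal (Gamma (s + 1) / 2)"
proof -
  define F where "F t = t powr s / exp t" for t :: real
  define G where "G x = x powr (2 * s + 1) * exp (- x\<^sup>2)" for x :: real
  have substitution: "(\<integral>\<^sup>+x. ennreal (G x * indicator {0..real n} x) \<partial>lborel) * 2
      = (\<integral>\<^sup>+t. ennreal (F t * indicator {0..(real n)\<^sup>2} t) \<partial>lborel)" for n :: nat
  proof -
    have "(\<integral>\<^sup>+t. ennreal (F t * indicator {0\<^sup>2..(real n)\<^sup>2} t) \<partial>lborel)
        = (\<integral>\<^sup>+x. ennreal (F (x\<^sup>2) * (2 * x) * indicator {0..real n} x) \<partial>lborel)"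
    proof (rule nn_integral_substitution[where g="\<lambda>x. x\<^sup>2" and g'="\<lambda>x. 2 * x"])
      show "set_borel_measurable borel {0\<^sup>2..(real n)\<^sup>2} F"
        unfolding F_def set_borel_measurable_def by measurable
      show "((\<lambda>x. x\<^sup>2) has_real_derivative 2 * x) (at x)" for x :: real
        by (auto intro!: derivative_eq_intros)
      show "continuous_on {0..real n} (\<lambda>x. 2 * x)"
        by (intro continuous_intros)
    qed auto
    also have "\<dots> = (\<integral>\<^sup>+x. ennreal (G x * indicator {0..real n} x) * 2 \<partial>lborel)"
    proof (rule nn_integral_cong)
      fix x :: real
      show "ennreal (F (x\<^sup>2) * (2 * x) * indicator {0..real n} x)
          = ennreal (G x * indicator {0..real n} x) * 2"
      proof (cases "x > 0")
        case True
        have "(x\<^sup>2) powr s = (x powr 2) powr s"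
          using True by simp
        also have "\<dots> = x powr (2 * s)"
          by (rule powr_powr)
        finally have "F (x\<^sup>2) * (2 * x) = 2 * G x"
          using True by (simp add: F_def G_def powr_add exp_minus field_simps)
        then have "F (x\<^sup>2) * (2 * x) * indicator {0..real n} x = G x * indicator {0..real n} x * 2"
          by (simp add: mult_ac)
        then show ?thesis
          by (simp only: ennreal_mult'' zero_le_numeral ennreal_numeral)
      qed (auto simp: F_def G_def indicator_def)
    qed
    also have "\<dots> = (\<integral>\<^sup>+x. ennreal (G x * indicator {0..real n} x) \<partial>lborel) * 2"
      by (rule nn_integral_multc) (simp add: G_def)
    finally show ?thesis
      by simp
  qed
  have "(\<lambda>n. (\<integral>\<^sup>+x. ennreal (G x * indicator {0..real n} x) \<partial>lborel) * 2)
      \<longlonglongrightarrow> (\<integral>\<^sup>+x. ennreal (G x * indicator {0..} x) \<partial>lborel) * 2"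
    by (intro tendsto_mult_ennreal tendsto_const tendsto_nn_integral_indicator_Icc)
      (auto simp: G_def incseq_def filterlim_real_sequentially)
  moreover have "(\<lambda>n. \<integral>\<^sup>+t. ennreal (F t * indicator {0..(real n)\<^sup>2} t) \<partial>lborel)
      \<longlonglongrightarrow> (\<integral>\<^sup>+t. ennreal (F t * indicator {0..} t) \<partial>lborel)"
    by (rule tendsto_nn_integral_indicator_Icc)
      (auto simp: F_def incseq_def filterlim_real_sequentially power_mono
        intro!: filterlim_pow_at_top)
  ultimately have "(\<integral>\<^sup>+x. ennreal (G x * indicator {0..} x) \<partial>lborel) * 2
      = (\<integral>\<^sup>+t. ennreal (F t * indicator {0..} t) \<partial>lborel)"
    unfolding substitution by (rule LIMSEQ_unique)
  also have "\<dots> = ennreal (Gamma (s + 1))"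
    using Gamma_conv_nn_integral_real[of "s + 1"] assms by (simp add: F_def mult.commute)
  also have "\<dots> = ennreal (Gamma (s + 1) / 2) * 2"
    using ennreal_mult''[of 2 "Gamma (s + 1) / 2"] by simp
  finally have "(\<integral>\<^sup>+x. ennreal (G x * indicator {0..} x) \<partial>lborel) = ennreal (Gamma (s + 1) / 2)"
    using mult_right_ennreal_cancel[of _ 2] by simp
  then show ?thesis
    by (simp add: G_def mult_ac)
qed

lemma has_bochner_integral_gaussian_moment:
  fixes s :: real
  assumes "s > -1"
  shows "has_bochner_integral lborel (\<lambda>x. indicator {0<..} x * x powr (2 * s + 1) * exp (- x\<^sup>2))
           (Gamma (s + 1) / 2)"
proof (rule has_bochner_integral_nn_integral)
  have "indicator {0<..} x * x powr (2 * s + 1) * exp (- x\<^sup>2)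
      = indicator {0..} x * x powr (2 * s + 1) * exp (- x\<^sup>2)" for x :: real
    by (auto simp: indicator_def)
  then show "(\<integral>\<^sup>+x. ennreal (indicator {0<..} x * x powr (2 * s + 1) * exp (- x\<^sup>2)) \<partial>lborel)
      = ennreal (Gamma (s + 1) / 2)"
    by (simp only:) (rule nn_integral_gaussian_moment[OF assms])
qed (use assms in \<open>auto intro: less_imp_le\<close>)

section \<open>A moment functional on polynomials\<close>

text \<open>For g > -1, gamma_moment g p is twice the integral of p(x^2) exp(-x^2) against
  x^(2g+1) dx over the half-line (has_bochner_integral_gamma_moment). Integration by parts against
  this weight becomes the purely algebraic identity gamma_moment_pderiv.\<close>
definition gamma_moment :: "real \<Rightarrow> real poly \<Rightarrow> real" where
  "gamma_moment g p = (\<Sum>i\<le>degree p. coeff p i * Gamma (real i + g + 1))"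

lemma gamma_moment_eq_sum:
  "degree p \<le> n \<Longrightarrow> gamma_moment g p = (\<Sum>i\<le>n. coeff p i * Gamma (real i + g + 1))"
  unfolding gamma_moment_def by (rule sum.mono_neutral_left) (auto simp: coeff_eq_0)

lemma has_bochner_integral_gamma_moment:
  fixes g :: real
  assumes "g > -1"
  shows "has_bochner_integral lborel
           (\<lambda>x. indicator {0<..} x * (poly p (x\<^sup>2) * exp (- x\<^sup>2) * x powr (2 * g + 1)))
           (gamma_moment g p / 2)"
proof -
  have "indicator {0<..} x * (poly p (x\<^sup>2) * exp (- x\<^sup>2) * x powr (2 * g + 1))
      = (\<Sum>i\<le>degree p. coeff p i *
           (indicator {0<..} x * x powr (2 * (real i + g) + 1) * exp (- x\<^sup>2)))" for x :: real
  proof (cases "x > 0")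
    case True
    have power_eq: "(x\<^sup>2) ^ i * x powr (2 * g + 1) = x powr (2 * (real i + g) + 1)" for i
    proof -
      have "(x\<^sup>2) ^ i = x powr (real (2 * i))"
        using powr_realpow[OF True, of "2 * i"] by (simp add: power_mult)
      then show ?thesis
        using True by (simp add: powr_add[symmetric] algebra_simps)
    qed
    have "poly p (x\<^sup>2) * exp (- x\<^sup>2) * x powr (2 * g + 1)
        = (\<Sum>i\<le>degree p. coeff p i * ((x\<^sup>2) ^ i * x powr (2 * g + 1)) * exp (- x\<^sup>2))"
      by (simp add: poly_altdef sum_distrib_left sum_distrib_right mult_ac)
    then show ?thesis
      using True by (simp only: power_eq mult.assoc) simp
  qed simp
  moreover have "has_bochner_integral lborel
      (\<lambda>x. \<Sum>i\<le>degree p. coeff p i *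
         (indicator {0<..} x * x powr (2 * (real i + g) + 1) * exp (- x\<^sup>2)))
      (\<Sum>i\<le>degree p. coeff p i * (Gamma (real i + g + 1) / 2))"
    using has_bochner_integral_gaussian_moment[of "real i + g" for i] assms
    by (intro has_bochner_integral_sum has_bochner_integral_mult_right) (simp add: add.assoc)
  ultimately show ?thesis
    by (simp add: gamma_moment_def sum_divide_distrib)
qed

lemma gamma_moment_square_nonneg:
  assumes "g > -1"
  shows "gamma_moment g (q * q) \<ge> 0"
proof -
  let ?f = "\<lambda>x. indicator {0<..} x * (poly (q * q) (x\<^sup>2) * exp (- x\<^sup>2) * x powr (2 * g + 1))"
  have "0 \<le> integral\<^sup>L lborel ?f"
    by (rule integral_nonneg_AE) (auto simp: indicator_def)
  moreover have "integral\<^sup>L lborel ?f = gamma_moment g (q * q) / 2"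
    using has_bochner_integral_gamma_moment[OF assms] by (rule has_bochner_integral_integral_eq)
  ultimately show ?thesis
    by linarith
qed

lemma gamma_moment_0 [simp]: "gamma_moment g 0 = 0"
  by (simp add: gamma_moment_def)

lemma gamma_moment_add: "gamma_moment g (p + q) = gamma_moment g p + gamma_moment g q"
proof -
  let ?n = "max (degree p) (degree q)"
  have "gamma_moment g (p + q) = (\<Sum>i\<le>?n. coeff (p + q) i * Gamma (real i + g + 1))"
    by (rule gamma_moment_eq_sum) (simp add: degree_add_le)
  also have "\<dots> = (\<Sum>i\<le>?n. coeff p i * Gamma (real i + g + 1))
                    + (\<Sum>i\<le>?n. coeff q i * Gamma (real i + g + 1))"
    by (simp add: algebra_simps sum.distrib)
  also have "\<dots> = gamma_moment g p + gamma_moment g q"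
    by (simp add: gamma_moment_eq_sum[symmetric])
  finally show ?thesis .
qed

lemma gamma_moment_smult: "gamma_moment g (smult c p) = c * gamma_moment g p"
proof -
  have "gamma_moment g (smult c p) = (\<Sum>i\<le>degree p. coeff (smult c p) i * Gamma (real i + g + 1))"
    by (rule gamma_moment_eq_sum) simp
  then show ?thesis by (simp add: gamma_moment_def sum_distrib_left mult.assoc)
qed

lemma gamma_moment_minus: "gamma_moment g (- p) = - gamma_moment g p"
  using gamma_moment_smult[of g "-1" p] by simp

lemma gamma_moment_diff: "gamma_moment g (p - q) = gamma_moment g p - gamma_moment g q"
  using gamma_moment_add[of g p "-q"] gamma_moment_minus[of g q] by simp

lemma gamma_moment_numeral[simp]: "gamma_moment g (numeral n * p) = numeral n * gamma_moment g p"
proof -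
  have "numeral n * p = smult (numeral n) p" by (simp add: numeral_poly)
  then show ?thesis by (simp add: gamma_moment_smult)
qed

lemma gamma_moment_sum: "gamma_moment g (\<Sum>k\<in>A. f k) = (\<Sum>k\<in>A. gamma_moment g (f k))"
  by (induction A rule: infinite_finite_induct) (auto simp: gamma_moment_add)

lemma gamma_moment_pCons_0: "gamma_moment g (pCons 0 p) = gamma_moment (g + 1) p"
proof -
  have "gamma_moment g (pCons 0 p)
      = (\<Sum>i\<le>Suc (degree p). coeff (pCons 0 p) i * Gamma (real i + g + 1))"
    by (rule gamma_moment_eq_sum) (simp add: degree_pCons_le)
  also have "\<dots> = (\<Sum>i\<le>degree p. coeff p i * Gamma (real i + (g + 1) + 1))"
    by (subst sum.atMost_Suc_shift) (simp add: algebra_simps)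
  also have "\<dots> = gamma_moment (g + 1) p"
    by (simp add: gamma_moment_def)
  finally show ?thesis .
qed

lemma gamma_moment_pderiv:
  assumes "g > -1"
  shows "gamma_moment (g + 1) (pderiv p) = gamma_moment (g + 1) p - (g + 1) * gamma_moment g p"
proof -
  let ?n = "degree p"
  have Gamma_rec: "Gamma (real i + (g + 1) + 1) = (real i + g + 1) * Gamma (real i + g + 1)" for i
  proof -
    have "real i + g + 1 \<notin> \<int>\<^sub>\<le>\<^sub>0"
      using assms by (auto elim!: nonpos_Ints_cases)
    from Gamma_plus1[OF this] show ?thesis
      by (simp add: add.assoc)
  qed
  have "gamma_moment (g + 1) (pderiv p)
      = (\<Sum>i\<le>?n. coeff (pderiv p) i * Gamma (real i + (g + 1) + 1))"
    by (rule gamma_moment_eq_sum) (simp add: degree_pderiv)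
  also have "\<dots> = (\<Sum>i\<le>?n. real (Suc i) * coeff p (Suc i) * Gamma (real (Suc i) + g + 1))"
    by (simp add: coeff_pderiv algebra_simps)
  also have "\<dots> = (\<Sum>i\<le>Suc ?n. real i * coeff p i * Gamma (real i + g + 1))"
    by (subst sum.atMost_Suc_shift) simp
  also have "\<dots> = (\<Sum>i\<le>?n. real i * coeff p i * Gamma (real i + g + 1))"
    by (simp add: coeff_eq_0)
  also have "\<dots> = (\<Sum>i\<le>?n. coeff p i * Gamma (real i + (g + 1) + 1)
                      - (g + 1) * (coeff p i * Gamma (real i + g + 1)))"
    by (rule sum.cong, simp, subst Gamma_rec, simp add: algebra_simps)
  also have "\<dots> = (\<Sum>i\<le>?n. coeff p i * Gamma (real i + (g + 1) + 1))
                    - (g + 1) * (\<Sum>i\<le>?n. coeff p i * Gamma (real i + g + 1))"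
    by (simp add: sum_distrib_left sum_subtractf)
  also have "\<dots> = gamma_moment (g + 1) p - (g + 1) * gamma_moment g p"
    by (simp add: gamma_moment_def)
  finally show ?thesis .
qed

lemma gamma_moment_X_mult: "gamma_moment g ([:0,1:] * p) = gamma_moment (g + 1) p"
proof -
  have "pCons 0 p = [:0,1:] * p" by simp
  then show ?thesis using gamma_moment_pCons_0[of g p] by simp
qed

lemma gamma_moment_X_mult': "gamma_moment (g - 1) ([:0,1:] * p) = gamma_moment g p"
  using gamma_moment_X_mult[of "g - 1" p] by simp

lemma discriminant_le_if_quadratic_nonneg:
  fixes A B C :: real
  assumes nonneg: "\<And>s t. 0 \<le> s * s * A + 2 * s * t * B + t * t * C" and "C \<ge> 0"
  shows "B * B \<le> A * C"
proof (cases "C > 0")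
  case True
  have "0 \<le> C * C * A + 2 * C * (-B) * B + (-B) * (-B) * C"
    by (rule nonneg)
  then have "0 \<le> C * (A * C - B * B)"
    by (simp add: algebra_simps)
  with True show ?thesis
    by (simp add: zero_le_mult_iff)
next
  case False
  with \<open>C \<ge> 0\<close> have "C = 0"
    by simp
  show ?thesis
  proof (rule ccontr)
    assume "\<not> ?thesis"
    with \<open>C = 0\<close> have "B \<noteq> 0"
      by auto
    have "0 \<le> 1 * 1 * A + 2 * 1 * (-(A + 1) / (2 * B)) * B + 0"
      using nonneg[of 1 "-(A + 1) / (2 * B)"] \<open>C = 0\<close> by simp
    also have "\<dots> = -1"
      using \<open>B \<noteq> 0\<close> by (simp add: field_simps)
    finally show False
      by simp
  qed
qed

text \<open>With Q = 2P' - P, integration by parts gives gamma_moment b (P * Q) = -b * A where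
  A = gamma_moment (b - 1) (P * P); positivity of gamma_moment (b - 1) on the squares of
  s * P + t * X * Q (X the variable) is a Cauchy-Schwarz inequality, whence b^2 * A^2 <= A * C.\<close>
lemma gamma_moment_pderiv_hardy:
  assumes "b > 0"
  shows "b\<^sup>2 * gamma_moment (b - 1) (P * P)
           \<le> gamma_moment (b + 1) ((2 * pderiv P - P) * (2 * pderiv P - P))"
proof -
  have nonneg: "gamma_moment (b - 1) (q * q) \<ge> 0" for q
    using assms by (intro gamma_moment_square_nonneg) simp
  define Q where "Q = 2 * pderiv P - P"
  define A where "A = gamma_moment (b - 1) (P * P)"
  define B where "B = gamma_moment b (P * Q)"
  define C where "C = gamma_moment (b + 1) (Q * Q)"
  have "gamma_moment b (pderiv (P * P)) = gamma_moment b (P * P) - b * A"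
    using gamma_moment_pderiv[of "b - 1" "P * P"] assms by (simp add: A_def)
  moreover have "pderiv (P * P) = P * pderiv P + P * pderiv P"
    by (simp add: pderiv_mult)
  moreover have "P * Q = 2 * (P * pderiv P) - P * P"
    by (simp add: Q_def algebra_simps)
  then have "B = 2 * gamma_moment b (P * pderiv P) - gamma_moment b (P * P)"
    by (simp only: B_def gamma_moment_diff gamma_moment_numeral)
  ultimately have B_eq: "B = - (b * A)"
    by (simp add: gamma_moment_add)
  have "A \<ge> 0"
    using nonneg[of P] by (simp add: A_def)
  have "C \<ge> 0"
    using nonneg[of "[:0,1:] * Q"] by (simp add: gamma_moment_pCons_0 C_def)
  have "0 \<le> s * s * A + 2 * s * t * B + t * t * C" for s t
  proof -
    have square: "(smult s P + smult t ([:0,1:] * Q)) * (smult s P + smult t ([:0,1:] * Q))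
        = smult (s * s) (P * P) + smult (s * t) ([:0,1:] * (P * Q))
          + smult (s * t) ([:0,1:] * (P * Q)) + smult (t * t) ([:0,1:] * ([:0,1:] * (Q * Q)))"
      by (simp add: algebra_simps)
    have "0 \<le> gamma_moment (b - 1)
        ((smult s P + smult t ([:0,1:] * Q)) * (smult s P + smult t ([:0,1:] * Q)))"
      by (rule nonneg)
    also have "\<dots> = s * s * A + 2 * s * t * B + t * t * C"
      unfolding square
      by (simp only: gamma_moment_add gamma_moment_smult gamma_moment_X_mult' gamma_moment_X_mult
          A_def B_def C_def) (simp add: algebra_simps)
    finally show ?thesis .
  qed
  then have "B * B \<le> A * C"
    using \<open>C \<ge> 0\<close> by (rule discriminant_le_if_quadratic_nonneg)
  then have "(b\<^sup>2 * A) * A \<le> C * A"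
    by (simp add: B_eq power2_eq_square algebra_simps)
  then have "b\<^sup>2 * A \<le> C"
    using \<open>A \<ge> 0\<close> \<open>C \<ge> 0\<close> by (cases "A = 0") (auto simp: mult_le_cancel_right)
  then show ?thesis
    by (simp add: A_def C_def Q_def)
qed

text \<open>On f = P(x^2) exp(-x^2/2), the Laguerre operator -f'' - ((2b+1)/x) f' + x^2 f of
  L^2(d mu_b) acts as f \<mapsto> (laguerre_op b P)(x^2) exp(-x^2/2).\<close>
definition laguerre_op :: "real \<Rightarrow> real poly \<Rightarrow> real poly" where
  "laguerre_op b P = smult (-4) ([:0,1:] * pderiv (pderiv P)) + smult 4 ([:0,1:] * pderiv P)
     - smult (4 * (b + 1)) (pderiv P) + smult (2 * b + 2) P"

lemma gamma_moment_laguerre_op_eq: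
  assumes "b > -1"
  shows "gamma_moment (b + 1) ((2 * pderiv P - P) * (2 * pderiv P - P))
           + gamma_moment (b + 1) (P * P) = gamma_moment b (P * laguerre_op b P)"
proof -
  let ?M = "gamma_moment (b + 1)" and ?M' = "gamma_moment b"
  let ?D = "pderiv P" and ?DD = "pderiv (pderiv P)"
  have "pderiv (P * ?D) = ?D * ?D + P * ?DD"
    by (simp add: pderiv_mult)
  then have parts1: "?M (?D * ?D) + ?M (P * ?DD) = ?M (P * ?D) - (b + 1) * ?M' (P * ?D)"
    using gamma_moment_pderiv[OF assms, of "P * ?D"] by (simp add: gamma_moment_add)
  have "pderiv (P * P) = P * ?D + P * ?D"
    by (simp add: pderiv_mult)
  then have parts2: "2 * ?M (P * ?D) = ?M (P * P) - (b + 1) * ?M' (P * P)"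
    using gamma_moment_pderiv[OF assms, of "P * P"] by (simp add: gamma_moment_add)
  have "(2 * ?D - P) * (2 * ?D - P) = 4 * (?D * ?D) - 4 * (P * ?D) + P * P"
    by (simp add: algebra_simps)
  then have lhs: "?M ((2 * ?D - P) * (2 * ?D - P))
      = 4 * ?M (?D * ?D) - 4 * ?M (P * ?D) + ?M (P * P)"
    by (simp add: gamma_moment_add gamma_moment_diff)
  have "P * laguerre_op b P = smult (-4) ([:0,1:] * (P * ?DD)) + smult 4 ([:0,1:] * (P * ?D))
      - smult (4 * (b + 1)) (P * ?D) + smult (2 * b + 2) (P * P)"
    by (simp add: laguerre_op_def algebra_simps)
  then have rhs: "?M' (P * laguerre_op b P)
      = -4 * ?M (P * ?DD) + 4 * ?M (P * ?D)
        - 4 * (b + 1) * ?M' (P * ?D) + (2 * b + 2) * ?M' (P * P)"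
    by (simp add: gamma_moment_add gamma_moment_diff gamma_moment_smult gamma_moment_pCons_0)
  show ?thesis
    using lhs rhs parts1 parts2 by (simp add: algebra_simps)
qed

lemma gamma_moment_laguerre_op_hardy:
  assumes "b > 0"
  shows "b\<^sup>2 * gamma_moment (b - 1) (P * P) \<le> gamma_moment b (P * laguerre_op b P)"
proof -
  have "b\<^sup>2 * gamma_moment (b - 1) (P * P)
      \<le> gamma_moment (b + 1) ((2 * pderiv P - P) * (2 * pderiv P - P))"
    using assms by (rule gamma_moment_pderiv_hardy)
  also have "\<dots> \<le> gamma_moment (b + 1) ((2 * pderiv P - P) * (2 * pderiv P - P))
                    + gamma_moment (b + 1) (P * P)"
    using assms gamma_moment_square_nonneg[of "b + 1" P] by simp
  also have "\<dots> = gamma_moment b (P * laguerre_op b P)"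
    using assms by (intro gamma_moment_laguerre_op_eq) simp
  finally show ?thesis .
qed

section \<open>Laguerre polynomials\<close>

definition laguerre_coeff :: "real \<Rightarrow> nat \<Rightarrow> nat \<Rightarrow> real" where
  "laguerre_coeff b k i = (-1) ^ i * ((real k + b) gchoose (k - i)) / fact i"

definition laguerre_polynomial :: "real \<Rightarrow> nat \<Rightarrow> real poly" where
  "laguerre_polynomial b k = (\<Sum>i\<le>k. monom (laguerre_coeff b k i) i)"

lemma coeff_laguerre_polynomial:
  "coeff (laguerre_polynomial b k) i = (if i \<le> k then laguerre_coeff b k i else 0)"
  by (simp add: laguerre_polynomial_def coeff_sum coeff_monom)

lemma degree_laguerre_polynomial: "degree (laguerre_polynomial b k) \<le> k"
  unfolding laguerre_polynomial_def
  by (rule degree_sum_le) (auto intro: order_trans[OF degree_monom_le])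

lemma poly_laguerre_polynomial: "poly (laguerre_polynomial b k) x = laguerre_poly b k x"
  by (simp add: laguerre_polynomial_def laguerre_poly_def poly_sum poly_monom laguerre_coeff_def)

lemma coeff_X_mult: "coeff ([:0,1:] * (p :: real poly)) i = (if i = 0 then 0 else coeff p (i - 1))"
proof -
  have "[:0,1:] * p = pCons 0 p" by simp
  then show ?thesis by (simp add: coeff_pCons')
qed

lemma coeff_laguerre_op:
  "coeff (laguerre_op b P) i
     = (4 * real i + 2 * b + 2) * coeff P i - 4 * (real i + 1) * (real i + b + 1) * coeff P (Suc i)"
  by (cases i) (simp_all add: laguerre_op_def coeff_pderiv coeff_X_mult algebra_simps)

lemma coeff_laguerre_polynomial_Suc:
  "(real i + 1) * (real i + b + 1) * coeff (laguerre_polynomial b k) (Suc i)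
     = (real i - real k) * coeff (laguerre_polynomial b k) i"
proof (cases "i < k")
  case True
  define m where "m = k - Suc i"
  have km: "k - i = Suc m" using True by (simp add: m_def)
  have am: "real k + b - real m = real i + b + 1" using True by (simp add: m_def of_nat_diff)
  have absorb: "(real i + b + 1) * ((real k + b) gchoose m)
      = real (Suc m) * ((real k + b) gchoose Suc m)"
    using gbinomial_mult_1[of "real k + b" m] am by (simp add: algebra_simps)
  have "(real i + 1) * (real i + b + 1) * coeff (laguerre_polynomial b k) (Suc i)
      = (real i + 1) * (real i + b + 1) * ((-1) ^ Suc i * ((real k + b) gchoose m) / fact (Suc i))"
    using True by (simp add: coeff_laguerre_polynomial laguerre_coeff_def m_def)
  also have "\<dots> = - ((real i + b + 1) * ((real k + b) gchoose m)) * (-1) ^ i / fact i"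
  proof -
    have fact_Suc: "fact (Suc i) = (real i + 1) * (fact i :: real)"
      by simp
    have sign: "(-1::real) ^ Suc i = - ((-1) ^ i)"
      by simp
    have cancel: "(r + 1) * c * (- s * G / ((r + 1) * F)) = - (c * G) * s / F"
      if "r \<ge> 0" "F > 0" for r c s G F :: real
      using that by (simp add: divide_simps)
    show ?thesis
      unfolding fact_Suc sign by (rule cancel) simp_all
  qed
  also have "\<dots> = - (real (Suc m) * ((real k + b) gchoose Suc m)) * (-1) ^ i / fact i"
    by (simp only: absorb)
  also have "\<dots> = (real i - real k) * coeff (laguerre_polynomial b k) i"
    using True
    by (simp add: coeff_laguerre_polynomial laguerre_coeff_def km m_def of_nat_diff field_simps)
  finally show ?thesis .
next
  case False
  then show ?thesis by (cases "i = k") (auto simp: coeff_laguerre_polynomial)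
qed

lemma laguerre_op_laguerre_polynomial:
  "laguerre_op b (laguerre_polynomial b k)
     = smult (4 * real k + 2 * b + 2) (laguerre_polynomial b k)"
proof (rule poly_eqI)
  fix i
  show "coeff (laguerre_op b (laguerre_polynomial b k)) i
      = coeff (smult (4 * real k + 2 * b + 2) (laguerre_polynomial b k)) i"
    unfolding coeff_laguerre_op coeff_smult
    using coeff_laguerre_polynomial_Suc[of i b k] by (simp add: algebra_simps)
qed

lemma Gamma_add_of_nat:
  assumes "z > (0::real)"
  shows "Gamma (z + real m) = Gamma z * pochhammer z m"
proof -
  have "z \<notin> \<int>\<^sub>\<le>\<^sub>0" using assms by (auto elim!: nonpos_Ints_cases)
  from pochhammer_Gamma[OF this, of m] show ?thesis
    using Gamma_real_pos[OF assms] by (simp add: field_simps)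
qed

text \<open>By Chu-Vandermonde; the binomial coefficient vanishes for i < k, which gives orthogonality.\<close>
lemma gamma_moment_monom_mult_laguerre:
  assumes "b > -1"
  shows "gamma_moment b (monom 1 i * laguerre_polynomial b k)
           = Gamma (real i + b + 1) * ((real k - real i - 1) gchoose k)"
proof -
  define z where "z = real i + b + 1"
  have z: "z > 0"
    using assms by (simp add: z_def)
  define f where
    "f j = coeff (monom 1 i * laguerre_polynomial b k) j * Gamma (real j + b + 1)" for j
  have "degree (monom 1 i * laguerre_polynomial b k) \<le> i + k"
    using degree_mult_le[of "monom (1::real) i" "laguerre_polynomial b k"]
      degree_laguerre_polynomial[of b k] degree_monom_le[of "1::real" i]
    by linarith
  then have "gamma_moment b (monom 1 i * laguerre_polynomial b k) = (\<Sum>j\<le>i + k. f j)"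
    unfolding f_def by (rule gamma_moment_eq_sum)
  also have "\<dots> = (\<Sum>j\<in>{0 + i..k + i}. f j)"
  proof (rule sum.mono_neutral_right)
    show "\<forall>j\<in>{..i + k} - {0 + i..k + i}. f j = 0"
      by (auto simp: f_def coeff_monom_mult)
  qed auto
  also have "\<dots> = (\<Sum>m\<in>{0..k}. f (m + i))"
    by (rule sum.shift_bounds_cl_nat_ivl)
  also have "\<dots> = (\<Sum>m\<in>{0..k}. ((-z) gchoose m) * ((real k + b) gchoose (k - m))) * Gamma z"
    unfolding sum_distrib_right
  proof (rule sum.cong)
    fix m assume m: "m \<in> {0..k}"
    have coeff_eq: "coeff (monom 1 i * laguerre_polynomial b k) (m + i) = laguerre_coeff b k m"
      using m by (simp add: coeff_monom_mult coeff_laguerre_polynomial)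
    have shift: "real (m + i) + b + 1 = z + real m"
      by (simp add: z_def)
    have "f (m + i) = laguerre_coeff b k m * Gamma (z + real m)"
      unfolding f_def coeff_eq shift by simp
    also have "\<dots> = laguerre_coeff b k m * Gamma z * pochhammer z m"
      by (simp add: Gamma_add_of_nat[OF z])
    also have "\<dots> = ((-z) gchoose m) * ((real k + b) gchoose (k - m)) * Gamma z"
      by (simp add: gbinomial_pochhammer[of "-z"] laguerre_coeff_def mult_ac)
    finally show "f (m + i) = ((-z) gchoose m) * ((real k + b) gchoose (k - m)) * Gamma z" .
  qed simp
  also have "\<dots> = ((-z + (real k + b)) gchoose k) * Gamma z"
    using gbinomial_Vandermonde[of "-z" "real k + b" k] by (simp add: atLeast0AtMost)
  also have "\<dots> = Gamma (real i + b + 1) * ((real k - real i - 1) gchoose k)"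
    by (simp add: z_def algebra_simps)
  finally show ?thesis .
qed

lemma gbinomial_diff_eq_0:
  assumes "i < k"
  shows "(real k - real i - 1) gchoose k = 0"
proof -
  have nat_diff: "real k - real i - 1 = real (k - i - 1)"
    using assms by (simp add: of_nat_diff)
  show ?thesis
    unfolding nat_diff binomial_gbinomial[symmetric] using assms by simp
qed

lemma gbinomial_minus_one: "((-1::real) gchoose k) = (-1) ^ k"
  using gbinomial_minus[of "1::real" k] binomial_gbinomial[of k k, where 'a=real] by simp

lemma laguerre_polynomial_eq_sum_monom:
  "laguerre_polynomial b m = (\<Sum>i\<le>m. smult (laguerre_coeff b m i) (monom 1 i))"
  by (simp add: laguerre_polynomial_def smult_monom)

lemma gamma_moment_laguerre_mult_le:
  assumes "b > -1" and "m \<le> k"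
  shows "gamma_moment b (laguerre_polynomial b m * laguerre_polynomial b k)
           = (if m = k then Gamma (real k + b + 1) / fact k else 0)"
proof -
  let ?t = "\<lambda>i. laguerre_coeff b m i * (Gamma (real i + b + 1) * ((real k - real i - 1) gchoose k))"
  have "gamma_moment b (laguerre_polynomial b m * laguerre_polynomial b k) = (\<Sum>i\<le>m. ?t i)"
    unfolding laguerre_polynomial_eq_sum_monom[of b m] sum_distrib_right
    by (simp add: gamma_moment_sum gamma_moment_smult gamma_moment_monom_mult_laguerre[OF assms(1)])
  also have "\<dots> = (if m = k then Gamma (real k + b + 1) / fact k else 0)"
  proof (cases "m = k")
    case True
    have "(\<Sum>i\<le>m. ?t i) = (\<Sum>i\<in>{k}. ?t i)"
      by (rule sum.mono_neutral_right) (use True gbinomial_diff_eq_0 in auto)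
    also have "\<dots> = Gamma (real k + b + 1) / fact k"
      using True by (simp add: laguerre_coeff_def gbinomial_minus_one power_mult_distrib[symmetric])
    finally show ?thesis
      using True by simp
  next
    case False
    with \<open>m \<le> k\<close> have "\<forall>i\<in>{..m}. i < k"
      by auto
    with False show ?thesis
      by (simp add: gbinomial_diff_eq_0)
  qed
  finally show ?thesis .
qed

lemma gamma_moment_laguerre_orthogonal:
  assumes "b > -1"
  shows "gamma_moment b (laguerre_polynomial b m * laguerre_polynomial b k)
           = (if m = k then Gamma (real k + b + 1) / fact k else 0)"
  using gamma_moment_laguerre_mult_le[OF assms, of m k]
    gamma_moment_laguerre_mult_le[OF assms, of k m]
  by (cases "m \<le> k") (simp_all add: mult.commute)

definition laguerre_const :: "real \<Rightarrow> nat \<Rightarrow> real" where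
  "laguerre_const b k = sqrt (2 * Gamma (real k + 1) / Gamma (real k + b + 1))"

text \<open>laguerre_comb b c K is the polynomial P with
  (sum k in K. c k * laguerre_fun b k x) = P(x^2) exp(-x^2/2).\<close>
definition laguerre_comb :: "real \<Rightarrow> (nat \<Rightarrow> real) \<Rightarrow> nat set \<Rightarrow> real poly" where
  "laguerre_comb b c K = (\<Sum>k\<in>K. smult (c k * laguerre_const b k) (laguerre_polynomial b k))"

lemma laguerre_const_square:
  assumes "b > -1"
  shows "laguerre_const b k * laguerre_const b k * (Gamma (real k + b + 1) / fact k) = 2"
proof -
  have "Gamma (real k + 1) = fact k"
    using Gamma_fact[of k] by (simp add: add.commute)
  moreover have "Gamma (real k + b + 1) > 0"
    using assms by simp
  ultimately show ?thesis
    unfolding laguerre_const_def by (simp add: divide_nonneg_pos)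
qed

lemma gamma_moment_laguerre_comb:
  assumes "b > -1" and "finite K"
  shows "gamma_moment b (laguerre_comb b c K * laguerre_comb b d K) = 2 * (\<Sum>k\<in>K. c k * d k)"
proof -
  let ?a = "\<lambda>k m. c k * laguerre_const b k * (d m * laguerre_const b m)"
  have "laguerre_comb b c K * laguerre_comb b d K
      = (\<Sum>k\<in>K. \<Sum>m\<in>K. smult (?a k m) (laguerre_polynomial b k * laguerre_polynomial b m))"
    unfolding laguerre_comb_def sum_product by (simp add: mult_smult_left mult_smult_right mult_ac)
  then have "gamma_moment b (laguerre_comb b c K * laguerre_comb b d K)
      = (\<Sum>k\<in>K. \<Sum>m\<in>K. ?a k m * (if k = m then Gamma (real m + b + 1) / fact m else 0))"
    by (simp add: gamma_moment_sum gamma_moment_smult gamma_moment_laguerre_orthogonal[OF assms(1)])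
  also have "\<dots> = (\<Sum>k\<in>K. c k * d k
      * (laguerre_const b k * laguerre_const b k * (Gamma (real k + b + 1) / fact k)))"
    by (rule sum.cong) (auto simp: assms(2) if_distrib[where f="\<lambda>x. _ * x"] cong: if_cong)
  also have "\<dots> = 2 * (\<Sum>k\<in>K. c k * d k)"
    unfolding laguerre_const_square[OF assms(1)] by (simp add: sum_distrib_left mult.commute)
  finally show ?thesis .
qed

lemma laguerre_op_add: "laguerre_op b (p + q) = laguerre_op b p + laguerre_op b q"
  by (simp add: laguerre_op_def pderiv_add algebra_simps smult_add_right)

lemma laguerre_op_smult: "laguerre_op b (smult c p) = smult c (laguerre_op b p)"
  by (simp add: laguerre_op_def pderiv_smult algebra_simps smult_add_right smult_diff_right
      mult_smult_right)

lemma laguerre_op_0: "laguerre_op b 0 = 0" by (simp add: laguerre_op_def)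

lemma laguerre_op_sum: "laguerre_op b (\<Sum>k\<in>K. f k) = (\<Sum>k\<in>K. laguerre_op b (f k))"
  by (induction K rule: infinite_finite_induct) (auto simp: laguerre_op_add laguerre_op_0)

lemma laguerre_op_laguerre_comb:
  "laguerre_op b (laguerre_comb b c K) = laguerre_comb b (\<lambda>k. (4 * real k + 2 * b + 2) * c k) K"
  unfolding laguerre_comb_def laguerre_op_sum laguerre_op_smult laguerre_op_laguerre_polynomial
  by (simp add: mult_ac)

lemma gamma_moment_laguerre_comb_hardy:
  assumes "b > 0" and "finite K"
  shows "b\<^sup>2 * gamma_moment (b - 1) (laguerre_comb b c K * laguerre_comb b c K)
           \<le> 2 * (\<Sum>k\<in>K. (4 * real k + 2 * b + 2) * (c k)\<^sup>2)"
proof -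
  let ?P = "laguerre_comb b c K"
  have "b\<^sup>2 * gamma_moment (b - 1) (?P * ?P) \<le> gamma_moment b (?P * laguerre_op b ?P)"
    using assms(1) by (rule gamma_moment_laguerre_op_hardy)
  also have "\<dots> = 2 * (\<Sum>k\<in>K. (4 * real k + 2 * b + 2) * (c k)\<^sup>2)"
    unfolding laguerre_op_laguerre_comb using assms
    by (simp add: gamma_moment_laguerre_comb power2_eq_square mult_ac)
  finally show ?thesis .
qed

lemma space_mu [simp]: "space (mu \<alpha>) = UNIV"
  by (simp add: mu_def)

lemma sets_mu [simp]: "sets (mu \<alpha>) = sets borel"
  by (simp add: mu_def)

lemma measurable_mu_iff [simp]: "measurable (mu \<alpha>) N = measurable borel N"
  by (rule measurable_cong_sets) auto

lemma nn_integral_mu: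
  "f \<in> borel_measurable borel \<Longrightarrow>
     (\<integral>\<^sup>+x. f x \<partial>mu \<alpha>) = (\<integral>\<^sup>+x. ennreal (indicator {0<..} x * x powr (2 * \<alpha> + 1)) * f x \<partial>lborel)"
  unfolding mu_def by (subst nn_integral_density) auto

lemma AE_mu_pos: "AE x in mu \<alpha>. x > 0"
  unfolding mu_def by (subst AE_density) (auto simp: indicator_def)

lemma mu_add_eq_density: "mu (\<alpha> + t) = density (mu \<alpha>) (\<lambda>x. ennreal (x powr (2 * t)))"
  unfolding mu_def
proof (subst density_density_eq)
  show "density lborel (\<lambda>x. ennreal (indicator {0<..} x * x powr (2 * (\<alpha> + t) + 1)))
      = density lborel
          (\<lambda>x. ennreal (indicator {0<..} x * x powr (2 * \<alpha> + 1)) * ennreal (x powr (2 * t)))"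
  proof (rule density_cong)
    show "AE x in lborel. ennreal (indicator {0<..} x * x powr (2 * (\<alpha> + t) + 1))
        = ennreal (indicator {0<..} x * x powr (2 * \<alpha> + 1)) * ennreal (x powr (2 * t))"
      by (intro AE_I2)
        (auto simp: indicator_def ennreal_mult[symmetric] powr_add[symmetric] algebra_simps)
  qed auto
qed auto

lemma nn_integral_mu_add:
  "f \<in> borel_measurable borel \<Longrightarrow>
     (\<integral>\<^sup>+x. f x \<partial>mu (\<alpha> + t)) = (\<integral>\<^sup>+x. ennreal (x powr (2 * t)) * f x \<partial>mu \<alpha>)"
  unfolding mu_add_eq_density by (simp add: nn_integral_density)

lemma L2_borel_measurable: "g \<in> L2 M \<Longrightarrow> g \<in> borel_measurable M"
  by (simp add: L2_def)

lemma L2_integrable: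
  assumes "g \<in> L2 M"
  shows "integrable M (\<lambda>x. (cmod (g x))\<^sup>2)"
proof -
  have [measurable]: "g \<in> borel_measurable M"
    using assms by (rule L2_borel_measurable)
  have "(\<integral>\<^sup>+x. ennreal (norm ((cmod (g x))\<^sup>2)) \<partial>M) < \<infinity>"
    using assms by (simp add: L2_def)
  then show ?thesis
    by (subst integrable_iff_bounded) auto
qed

lemma integrable_mult_L2:
  fixes f g :: "real \<Rightarrow> complex"
  assumes "f \<in> L2 M" and "g \<in> L2 M"
  shows "integrable M (\<lambda>x. f x * g x)"
proof (rule Bochner_Integration.integrable_bound[where f="\<lambda>x. (cmod (f x))\<^sup>2 + (cmod (g x))\<^sup>2"])
  show "integrable M (\<lambda>x. (cmod (f x))\<^sup>2 + (cmod (g x))\<^sup>2)"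
    using L2_integrable[OF assms(1)] L2_integrable[OF assms(2)] by auto
  show "(\<lambda>x. f x * g x) \<in> borel_measurable M"
    using L2_borel_measurable[OF assms(1)] L2_borel_measurable[OF assms(2)] by measurable
  have "cmod (f x) * cmod (g x) \<le> (cmod (f x))\<^sup>2 + (cmod (g x))\<^sup>2" for x
    using sum_squares_bound[of "cmod (f x)" "cmod (g x)"]
      mult_nonneg_nonneg[OF norm_ge_zero[of "f x"] norm_ge_zero[of "g x"]] by linarith
  then show "AE x in M. norm (f x * g x) \<le> norm ((cmod (f x))\<^sup>2 + (cmod (g x))\<^sup>2)"
    by (simp add: norm_mult)
qed

lemma nn_integral_L2_eq:
  assumes "g \<in> L2 M"
  shows "(\<integral>\<^sup>+x. ennreal ((cmod (g x))\<^sup>2) \<partial>M) = ennreal (\<integral>x. (cmod (g x))\<^sup>2 \<partial>M)"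
  by (rule nn_integral_eq_integral[OF L2_integrable[OF assms]]) auto

lemma borel_measurable_poly [measurable]:
  fixes f :: "'a \<Rightarrow> real"
  shows "f \<in> borel_measurable M \<Longrightarrow> (\<lambda>x. poly p (f x)) \<in> borel_measurable M"
  unfolding poly_altdef by measurable

lemma nn_integral_mu_poly:
  assumes "g > -1" and nonneg: "\<And>y. y \<ge> 0 \<Longrightarrow> poly p y \<ge> 0"
  shows "(\<integral>\<^sup>+x. ennreal (poly p (x\<^sup>2) * exp (- x\<^sup>2)) \<partial>mu g) = ennreal (gamma_moment g p / 2)"
proof -
  let ?f = "\<lambda>x. indicator {0<..} x * (poly p (x\<^sup>2) * exp (- x\<^sup>2) * x powr (2 * g + 1))"
  have "(\<integral>\<^sup>+x. ennreal (poly p (x\<^sup>2) * exp (- x\<^sup>2)) \<partial>mu g) = (\<integral>\<^sup>+x. ennreal (?f x) \<partial>lborel)"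
    by (subst nn_integral_mu)
      (auto simp: nonneg indicator_def ennreal_mult'[symmetric] mult_ac intro!: nn_integral_cong)
  also have "\<dots> = ennreal (integral\<^sup>L lborel ?f)"
    using has_bochner_integral_gamma_moment[OF assms(1), of p]
    by (intro nn_integral_eq_integral) (auto simp: has_bochner_integral_iff indicator_def nonneg)
  also have "\<dots> = ennreal (gamma_moment g p / 2)"
    using has_bochner_integral_gamma_moment[OF assms(1), of p]
    by (simp only: has_bochner_integral_integral_eq)
  finally show ?thesis .
qed

lemma AE_summable_if_nn_integral_le_geometric:
  fixes u :: "nat \<Rightarrow> 'a \<Rightarrow> real"
  assumes [measurable]: "\<And>i. u i \<in> borel_measurable M"
    and nonneg: "\<And>i x. u i x \<ge> 0"
    and bound: "\<And>i. (\<integral>\<^sup>+x. ennreal (u i x) \<partial>M) \<le> ennreal ((1/2) ^ i)"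
  shows "AE x in M. summable (\<lambda>i. u i x)"
proof -
  have "(\<integral>\<^sup>+x. (\<Sum>i. ennreal (u i x)) \<partial>M) = (\<Sum>i. \<integral>\<^sup>+x. ennreal (u i x) \<partial>M)"
    by (rule nn_integral_suminf) measurable
  also have "\<dots> \<le> (\<Sum>i. ennreal ((1/2) ^ i))"
    by (intro suminf_le bound) auto
  also have "\<dots> = ennreal 2"
    by (subst suminf_ennreal2) (auto simp: suminf_geometric)
  finally have "AE x in M. (\<Sum>i. ennreal (u i x)) \<noteq> \<infinity>"
    by (intro nn_integral_PInf_AE) (auto simp: top_unique)
  then show ?thesis
    by eventually_elim (auto intro: summable_suminf_not_top nonneg)
qed

lemma nn_integral_le_if_AE_tendsto:
  fixes f :: "nat \<Rightarrow> 'a \<Rightarrow> ennreal"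
  assumes [measurable]: "\<And>i. f i \<in> borel_measurable M"
    and lim: "AE x in M. (\<lambda>i. f i x) \<longlonglongrightarrow> g x"
    and bound: "eventually (\<lambda>i. (\<integral>\<^sup>+x. f i x \<partial>M) \<le> C) sequentially"
  shows "(\<integral>\<^sup>+x. g x \<partial>M) \<le> C"
proof -
  have "(\<integral>\<^sup>+x. g x \<partial>M) = (\<integral>\<^sup>+x. liminf (\<lambda>i. f i x) \<partial>M)"
    using lim
    by (intro nn_integral_cong_AE) (auto elim!: eventually_mono intro!: lim_imp_Liminf[symmetric])
  also have "\<dots> \<le> liminf (\<lambda>i. \<integral>\<^sup>+x. f i x \<partial>M)"
    by (rule nn_integral_liminf) measurable
  also have "\<dots> \<le> C"
    by (rule Liminf_le) (simp_all add: bound)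
  finally show ?thesis .
qed

lemma convergent_if_summable_scaled_diff:
  fixes G :: "nat \<Rightarrow> complex"
  assumes "summable (\<lambda>i. 4 ^ i * (cmod (G (Suc i) - G i))\<^sup>2)"
  shows "convergent G"
proof -
  define B where "B = (\<Sum>i. 4 ^ i * (cmod (G (Suc i) - G i))\<^sup>2)"
  have diff_bound: "cmod (G (Suc i) - G i) \<le> sqrt B * (1/2) ^ i" for i
  proof -
    have "4 ^ i * (cmod (G (Suc i) - G i))\<^sup>2 \<le> B"
      unfolding B_def using sum_le_suminf[OF assms, of "{i}"] by simp
    then have "(cmod (G (Suc i) - G i))\<^sup>2 \<le> B / 4 ^ i"
      by (simp add: field_simps)
    then have "cmod (G (Suc i) - G i) \<le> sqrt (B / 4 ^ i)"
      by (simp add: real_le_rsqrt)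
    also have "sqrt (B / 4 ^ i) = sqrt B * (1/2) ^ i"
      by (simp add: real_sqrt_divide real_sqrt_power power_divide)
    finally show ?thesis .
  qed
  have "summable (\<lambda>i. G (Suc i) - G i)"
    by (rule summable_comparison_test'[where g="\<lambda>i. sqrt B * (1/2) ^ i" and N=0])
      (auto intro!: summable_mult summable_geometric simp: diff_bound)
  then have "(\<lambda>i. G 0 + (\<Sum>j<i. G (Suc j) - G j)) \<longlonglongrightarrow> G 0 + (\<Sum>j. G (Suc j) - G j)"
    by (intro tendsto_intros summable_LIMSEQ)
  then show ?thesis
    by (auto simp: convergent_def sum_lessThan_telescope)
qed

text \<open>A subsequence whose increments decay geometrically in L^2 converges a.e., and Fatou's
  lemma turns the Cauchy bounds into bounds for the distance to the limit.\<close>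
lemma L2_Cauchy_has_limit:
  fixes F :: "nat \<Rightarrow> 'a \<Rightarrow> complex" and T :: "nat \<Rightarrow> real"
  assumes [measurable]: "\<And>n. F n \<in> borel_measurable M"
    and "T \<longlonglongrightarrow> 0"
    and bound: "\<And>m n. m \<le> n \<Longrightarrow> (\<integral>\<^sup>+x. ennreal ((cmod (F n x - F m x))\<^sup>2) \<partial>M) \<le> ennreal (T m)"
  shows "\<exists>h \<in> borel_measurable M. (\<lambda>n. \<integral>\<^sup>+x. ennreal ((cmod (F n x - h x))\<^sup>2) \<partial>M) \<longlonglongrightarrow> 0"
proof -
  have "\<forall>i. \<exists>N. \<forall>n\<ge>N. T n < (1/8) ^ i"
    using order_tendstoD(2)[OF \<open>T \<longlonglongrightarrow> 0\<close>] by (simp add: eventually_sequentially)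
  then obtain N where N: "\<And>i n. n \<ge> N i \<Longrightarrow> T n < (1/8) ^ i"
    by metis
  define r where "r i = i + (\<Sum>j\<le>i. N j)" for i
  have r_ge: "i \<le> r i" "N i \<le> r i" for i
    unfolding r_def using member_le_sum[of i "{..i}" N] by auto
  have r_mono: "r i \<le> r (Suc i)" for i
    unfolding r_def by simp
  have "AE x in M. summable (\<lambda>i. 4 ^ i * (cmod (F (r (Suc i)) x - F (r i) x))\<^sup>2)"
  proof (rule AE_summable_if_nn_integral_le_geometric)
    fix i
    have "(\<integral>\<^sup>+x. ennreal (4 ^ i * (cmod (F (r (Suc i)) x - F (r i) x))\<^sup>2) \<partial>M)
        = ennreal (4 ^ i) * (\<integral>\<^sup>+x. ennreal ((cmod (F (r (Suc i)) x - F (r i) x))\<^sup>2) \<partial>M)"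
      by (subst nn_integral_cmult[symmetric]) (auto simp: ennreal_mult)
    also have "\<dots> \<le> ennreal (4 ^ i) * ennreal ((1/8) ^ i)"
      using bound[OF r_mono, of i] N[OF r_ge(2), of i]
      by (intro mult_left_mono) (auto intro: order_trans ennreal_leI)
    also have "\<dots> = ennreal ((1/2) ^ i)"
      by (simp add: ennreal_mult[symmetric] power_mult_distrib[symmetric])
    finally show "(\<integral>\<^sup>+x. ennreal (4 ^ i * (cmod (F (r (Suc i)) x - F (r i) x))\<^sup>2) \<partial>M)
        \<le> ennreal ((1/2) ^ i)" .
  qed auto
  then have conv: "AE x in M. (\<lambda>i. F (r i) x) \<longlonglongrightarrow> lim (\<lambda>i. F (r i) x)"
  proof eventually_elim
    case (elim x)
    then show ?case
      using convergent_if_summable_scaled_diff[of "\<lambda>i. F (r i) x"]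
      by (simp add: convergent_LIMSEQ_iff)
  qed
  define h where "h x = lim (\<lambda>i. F (r i) x)" for x
  have h_measurable [measurable]: "h \<in> borel_measurable M"
    unfolding h_def by measurable
  have h_bound: "(\<integral>\<^sup>+x. ennreal ((cmod (F n x - h x))\<^sup>2) \<partial>M) \<le> ennreal (T n)" for n
  proof (rule nn_integral_le_if_AE_tendsto)
    show "AE x in M. (\<lambda>i. ennreal ((cmod (F n x - F (r i) x))\<^sup>2)) \<longlonglongrightarrow> ennreal ((cmod (F n x - h x))\<^sup>2)"
      using conv by eventually_elim (auto simp: h_def intro!: tendsto_intros)
    have "(\<integral>\<^sup>+x. ennreal ((cmod (F n x - F (r i) x))\<^sup>2) \<partial>M) \<le> ennreal (T n)" if "n \<le> i" for i
      using bound[of n "r i"] r_ge(1)[of i] that by (simp add: norm_minus_commute)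
    then show "eventually
        (\<lambda>i. (\<integral>\<^sup>+x. ennreal ((cmod (F n x - F (r i) x))\<^sup>2) \<partial>M) \<le> ennreal (T n)) sequentially"
      by (auto simp: eventually_sequentially)
  qed measurable
  have "(\<lambda>n. \<integral>\<^sup>+x. ennreal ((cmod (F n x - h x))\<^sup>2) \<partial>M) \<longlonglongrightarrow> 0"
  proof (rule tendsto_sandwich[where f="\<lambda>_. 0" and h="\<lambda>n. ennreal (T n)"])
    show "(\<lambda>n. ennreal (T n)) \<longlonglongrightarrow> 0"
      using tendsto_ennrealI[OF \<open>T \<longlonglongrightarrow> 0\<close>] by simp
  qed (auto simp: h_bound)
  with h_measurable show ?thesis
    by blast
qed

lemma L2_tendsto_imp_AE_subseq:
  fixes F :: "nat \<Rightarrow> 'a \<Rightarrow> complex"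
  assumes [measurable]: "\<And>n. F n \<in> borel_measurable M" "h \<in> borel_measurable M"
    and lim: "(\<lambda>n. \<integral>\<^sup>+x. ennreal ((cmod (F n x - h x))\<^sup>2) \<partial>M) \<longlonglongrightarrow> 0"
  shows "\<exists>r. AE x in M. (\<lambda>i. F (r i) x) \<longlonglongrightarrow> h x"
proof -
  have "\<forall>i. \<exists>n. (\<integral>\<^sup>+x. ennreal ((cmod (F n x - h x))\<^sup>2) \<partial>M) < ennreal ((1/2) ^ i)"
  proof
    fix i :: nat
    have "ennreal ((1/2) ^ i) > 0"
      by simp
    from order_tendstoD(2)[OF lim this]
    show "\<exists>n. (\<integral>\<^sup>+x. ennreal ((cmod (F n x - h x))\<^sup>2) \<partial>M) < ennreal ((1/2) ^ i)"
      by (auto simp: eventually_sequentially)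
  qed
  then obtain r where r: "\<And>i. (\<integral>\<^sup>+x. ennreal ((cmod (F (r i) x - h x))\<^sup>2) \<partial>M) < ennreal ((1/2) ^ i)"
    by metis
  have "AE x in M. summable (\<lambda>i. (cmod (F (r i) x - h x))\<^sup>2)"
    by (rule AE_summable_if_nn_integral_le_geometric) (auto intro: less_imp_le r)
  then have "AE x in M. (\<lambda>i. F (r i) x) \<longlonglongrightarrow> h x"
  proof eventually_elim
    case (elim x)
    then have "(\<lambda>i. (cmod (F (r i) x - h x))\<^sup>2) \<longlonglongrightarrow> 0"
      by (rule summable_LIMSEQ_zero)
    then have "(\<lambda>i. cmod (F (r i) x - h x)) \<longlonglongrightarrow> 0"
      using tendsto_real_sqrt by fastforce
    then show ?case
      by (simp add: tendsto_norm_zero_iff Lim_null[symmetric])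
  qed
  then show ?thesis
    by blast
qed

definition laguerre_sum :: "real \<Rightarrow> (nat \<Rightarrow> complex) \<Rightarrow> nat set \<Rightarrow> real \<Rightarrow> complex" where
  "laguerre_sum b c K x = (\<Sum>k\<in>K. c k * complex_of_real (laguerre_fun b k x))"

lemma laguerre_fun_eq_poly:
  "laguerre_fun b k x = laguerre_const b k * poly (laguerre_polynomial b k) (x\<^sup>2) * exp (- (x\<^sup>2) / 2)"
  by (simp add: laguerre_fun_def laguerre_const_def poly_laguerre_polynomial)

lemma borel_measurable_laguerre_fun [measurable]: "laguerre_fun b k \<in> borel_measurable borel"
  unfolding laguerre_fun_eq_poly[abs_def] by measurable

lemma borel_measurable_laguerre_sum [measurable]: "laguerre_sum b c K \<in> borel_measurable borel"
  unfolding laguerre_sum_def[abs_def] by measurable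

lemma cmod_laguerre_sum_square:
  "(cmod (laguerre_sum b c K x))\<^sup>2
     = poly (laguerre_comb b (\<lambda>k. Re (c k)) K * laguerre_comb b (\<lambda>k. Re (c k)) K
             + laguerre_comb b (\<lambda>k. Im (c k)) K * laguerre_comb b (\<lambda>k. Im (c k)) K) (x\<^sup>2)
       * exp (- x\<^sup>2)"
proof -
  have poly_comb: "poly (laguerre_comb b d K) y
      = (\<Sum>k\<in>K. d k * laguerre_const b k * poly (laguerre_polynomial b k) y)" for d y
    by (simp add: laguerre_comb_def poly_sum)
  have re: "Re (laguerre_sum b c K x)
      = poly (laguerre_comb b (\<lambda>k. Re (c k)) K) (x\<^sup>2) * exp (- (x\<^sup>2) / 2)"
    and im: "Im (laguerre_sum b c K x)
      = poly (laguerre_comb b (\<lambda>k. Im (c k)) K) (x\<^sup>2) * exp (- (x\<^sup>2) / 2)"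
    by (simp_all add: laguerre_sum_def poly_comb laguerre_fun_eq_poly sum_distrib_left mult_ac)
  have exp_square: "(exp (- (x\<^sup>2) / 2))\<^sup>2 = exp (- x\<^sup>2)"
    by (simp add: power2_eq_square flip: exp_add)
  show ?thesis
    unfolding cmod_power2 re im power_mult_distrib exp_square poly_add poly_mult
    by (simp add: power2_eq_square algebra_simps)
qed

lemma nn_integral_laguerre_sum:
  assumes "b > -1" and "finite K"
  shows "(\<integral>\<^sup>+x. ennreal ((cmod (laguerre_sum b c K x))\<^sup>2) \<partial>mu b) = ennreal (\<Sum>k\<in>K. (cmod (c k))\<^sup>2)"
proof -
  define P where "P = laguerre_comb b (\<lambda>k. Re (c k)) K"
  define Q where "Q = laguerre_comb b (\<lambda>k. Im (c k)) K"
  have "(\<integral>\<^sup>+x. ennreal ((cmod (laguerre_sum b c K x))\<^sup>2) \<partial>mu b)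
      = (\<integral>\<^sup>+x. ennreal (poly (P * P + Q * Q) (x\<^sup>2) * exp (- x\<^sup>2)) \<partial>mu b)"
    by (simp add: cmod_laguerre_sum_square P_def Q_def)
  also have "\<dots> = ennreal (gamma_moment b (P * P + Q * Q) / 2)"
    using assms(1) by (rule nn_integral_mu_poly) simp
  also have "gamma_moment b (P * P + Q * Q) / 2 = (\<Sum>k\<in>K. (cmod (c k))\<^sup>2)"
    unfolding P_def Q_def gamma_moment_add gamma_moment_laguerre_comb[OF assms]
    by (simp add: cmod_power2 sum.distrib power2_eq_square[symmetric])
  finally show ?thesis .
qed

lemma nn_integral_laguerre_sum_div_square:
  assumes "b > 0" and "finite K"
  shows "(\<integral>\<^sup>+x. ennreal ((cmod (laguerre_sum b c K x))\<^sup>2 / x\<^sup>2) \<partial>mu b)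
           \<le> ennreal ((\<Sum>k\<in>K. (4 * real k + 2 * b + 2) * (cmod (c k))\<^sup>2) / b\<^sup>2)"
proof -
  define P where "P = laguerre_comb b (\<lambda>k. Re (c k)) K"
  define Q where "Q = laguerre_comb b (\<lambda>k. Im (c k)) K"
  have "(\<integral>\<^sup>+x. ennreal ((cmod (laguerre_sum b c K x))\<^sup>2 / x\<^sup>2) \<partial>mu b)
      = (\<integral>\<^sup>+x. ennreal (x powr 2) * ennreal ((cmod (laguerre_sum b c K x))\<^sup>2 / x\<^sup>2) \<partial>mu (b - 1))"
    using mu_add_eq_density[of "b - 1" 1] by (simp add: nn_integral_density)
  also have "\<dots> = (\<integral>\<^sup>+x. ennreal (poly (P * P + Q * Q) (x\<^sup>2) * exp (- x\<^sup>2)) \<partial>mu (b - 1))"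
    by (rule nn_integral_cong_AE, use AE_mu_pos in eventually_elim)
      (simp add: cmod_laguerre_sum_square P_def Q_def flip: ennreal_mult)
  also have "\<dots> = ennreal (gamma_moment (b - 1) (P * P + Q * Q) / 2)"
    using assms(1) by (intro nn_integral_mu_poly) simp_all
  also have "\<dots> \<le> ennreal ((\<Sum>k\<in>K. (4 * real k + 2 * b + 2) * (cmod (c k))\<^sup>2) / b\<^sup>2)"
  proof (rule ennreal_leI)
    have "b\<^sup>2 * (gamma_moment (b - 1) (P * P + Q * Q) / 2)
        \<le> (\<Sum>k\<in>K. (4 * real k + 2 * b + 2) * (cmod (c k))\<^sup>2)"
      using gamma_moment_laguerre_comb_hardy[OF assms, of "\<lambda>k. Re (c k)"]
        gamma_moment_laguerre_comb_hardy[OF assms, of "\<lambda>k. Im (c k)"]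
      unfolding P_def Q_def gamma_moment_add
      by (simp add: cmod_power2 algebra_simps sum.distrib)
    then show "gamma_moment (b - 1) (P * P + Q * Q) / 2
        \<le> (\<Sum>k\<in>K. (4 * real k + 2 * b + 2) * (cmod (c k))\<^sup>2) / b\<^sup>2"
      using assms(1) by (simp add: field_simps)
  qed
  finally show ?thesis .
qed

lemma integrable_laguerre_sum:
  assumes "b > -1" and "finite K"
  shows "integrable (mu b) (\<lambda>x. (cmod (laguerre_sum b c K x))\<^sup>2)"
    and "(\<integral>x. (cmod (laguerre_sum b c K x))\<^sup>2 \<partial>mu b) = (\<Sum>k\<in>K. (cmod (c k))\<^sup>2)"
  using nn_integral_laguerre_sum[OF assms, of c]
  by (subst (asm) nn_integral_eq_integrable; auto simp: sum_nonneg)+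

lemma L2_laguerre_fun:
  assumes "b > -1"
  shows "(\<lambda>x. complex_of_real (laguerre_fun b k x)) \<in> L2 (mu b)"
  using nn_integral_laguerre_sum[OF assms, of "{k}" "\<lambda>_. 1"] by (simp add: L2_def laguerre_sum_def)

lemma bessel_inequality:
  assumes "b > -1" and g: "g \<in> L2 (mu b)" and "finite K"
  shows "(\<Sum>k\<in>K. (cmod (lag_coeff b g k))\<^sup>2) \<le> (\<integral>x. (cmod (g x))\<^sup>2 \<partial>mu b)"
proof -
  define c where "c = lag_coeff b g"
  define S where "S = laguerre_sum b c K"
  have integrable_coeff: "integrable (mu b) (\<lambda>x. g x * complex_of_real (laguerre_fun b k x))" for k
    using g L2_laguerre_fun[OF assms(1)] by (rule integrable_mult_L2)
  have c_eq: "c k = (\<integral>x. g x * complex_of_real (laguerre_fun b k x) \<partial>mu b)" for k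
    by (simp add: c_def lag_coeff_def)
  have g_cnj_S: "(\<lambda>x. g x * cnj (S x))
      = (\<lambda>x. \<Sum>k\<in>K. cnj (c k) * (g x * complex_of_real (laguerre_fun b k x)))"
    by (rule ext) (simp add: S_def laguerre_sum_def sum_distrib_left mult_ac)
  have integrable_g_cnj_S: "integrable (mu b) (\<lambda>x. g x * cnj (S x))"
    unfolding g_cnj_S using integrable_coeff by auto
  have "(\<integral>x. Re (g x * cnj (S x)) \<partial>mu b) = Re (\<integral>x. g x * cnj (S x) \<partial>mu b)"
    using integrable_g_cnj_S by (rule integral_Re)
  also have "\<dots> = Re (\<Sum>k\<in>K. cnj (c k) * c k)"
    unfolding g_cnj_S using integrable_coeff by (simp add: c_eq)
  finally have inner: "(\<integral>x. Re (g x * cnj (S x)) \<partial>mu b) = (\<Sum>k\<in>K. (cmod (c k))\<^sup>2)"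
    by (simp add: Re_sum cmod_power2 power2_eq_square[symmetric])
  have integrable_S: "integrable (mu b) (\<lambda>x. (cmod (S x))\<^sup>2)"
    and norm_S: "(\<integral>x. (cmod (S x))\<^sup>2 \<partial>mu b) = (\<Sum>k\<in>K. (cmod (c k))\<^sup>2)"
    unfolding S_def using integrable_laguerre_sum[OF assms(1,3)] by auto
  have expand: "(cmod (g x - S x))\<^sup>2 = (cmod (g x))\<^sup>2 - 2 * Re (g x * cnj (S x)) + (cmod (S x))\<^sup>2" for x
    unfolding cmod_power2 by (simp add: power2_eq_square algebra_simps)
  have "0 \<le> (\<integral>x. (cmod (g x - S x))\<^sup>2 \<partial>mu b)"
    by simp
  also have "\<dots> = (\<integral>x. (cmod (g x))\<^sup>2 \<partial>mu b) - 2 * (\<integral>x. Re (g x * cnj (S x)) \<partial>mu b)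
                    + (\<integral>x. (cmod (S x))\<^sup>2 \<partial>mu b)"
    unfolding expand
    by (intro has_bochner_integral_integral_eq has_bochner_integral_add has_bochner_integral_diff
        has_bochner_integral_mult_right has_bochner_integral_integrable L2_integrable[OF g]
        integrable_Re[OF integrable_g_cnj_S] integrable_S)
  finally show ?thesis
    using inner norm_S by (simp add: c_def)
qed

section \<open>The operator L^(-1/2)\<close>

definition Linv_coeff :: "real \<Rightarrow> (real \<Rightarrow> complex) \<Rightarrow> nat \<Rightarrow> complex" where
  "Linv_coeff b g k = complex_of_real ((4 * real k + 2 * b + 2) powr (-1/2)) * lag_coeff b g k"

lemma Linv_partial_eq_laguerre_sum: "Linv_partial b g n = laguerre_sum b (Linv_coeff b g) {..<n}"
  by (rule ext) (simp add: Linv_partial_def laguerre_sum_def Linv_coeff_def)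

lemma Linv_coeff_square:
  assumes "b > -1"
  shows "(4 * real k + 2 * b + 2) * (cmod (Linv_coeff b g k))\<^sup>2 = (cmod (lag_coeff b g k))\<^sup>2"
proof -
  define l where "l = 4 * real k + 2 * b + 2"
  have "l > 0"
    using assms by (simp add: l_def)
  then have "(l powr (-1/2))\<^sup>2 = inverse l"
    using powr_power[of l "-1/2" 2] by (simp add: powr_minus)
  then show ?thesis
    using \<open>l > 0\<close> by (simp add: Linv_coeff_def norm_mult power_mult_distrib flip: l_def)
qed

lemma summable_Linv_coeff_square:
  assumes "b > -1" and "g \<in> L2 (mu b)"
  shows "summable (\<lambda>k. (cmod (Linv_coeff b g k))\<^sup>2)"
proof (rule summableI_nonneg_bounded)
  fix n
  have "(cmod (Linv_coeff b g k))\<^sup>2 \<le> (cmod (lag_coeff b g k))\<^sup>2 / (2 * b + 2)" for k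
  proof -
    have "(2 * b + 2) * (cmod (Linv_coeff b g k))\<^sup>2
        \<le> (4 * real k + 2 * b + 2) * (cmod (Linv_coeff b g k))\<^sup>2"
      by (rule mult_right_mono) auto
    then show ?thesis
      using Linv_coeff_square[OF assms(1), of k g] assms(1) by (simp add: pos_le_divide_eq mult.commute)
  qed
  then have "(\<Sum>k<n. (cmod (Linv_coeff b g k))\<^sup>2) \<le> (\<Sum>k<n. (cmod (lag_coeff b g k))\<^sup>2) / (2 * b + 2)"
    by (simp add: sum_divide_distrib sum_mono)
  also have "\<dots> \<le> (\<integral>x. (cmod (g x))\<^sup>2 \<partial>mu b) / (2 * b + 2)"
    using bessel_inequality[OF assms, of "{..<n}"] assms(1) by (simp add: divide_right_mono)
  finally show "(\<Sum>k<n. (cmod (Linv_coeff b g k))\<^sup>2) \<le> (\<integral>x. (cmod (g x))\<^sup>2 \<partial>mu b) / (2 * b + 2)" .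
qed simp

lemma borel_measurable_Linv_partial [measurable]: "Linv_partial b g n \<in> borel_measurable borel"
  unfolding Linv_partial_eq_laguerre_sum by measurable

lemma nn_integral_Linv_partial_diff:
  assumes "b > -1" and "g \<in> L2 (mu b)" and "m \<le> n"
  shows "(\<integral>\<^sup>+x. ennreal ((cmod (Linv_partial b g n x - Linv_partial b g m x))\<^sup>2) \<partial>mu b)
           \<le> ennreal (\<Sum>i. (cmod (Linv_coeff b g (i + m)))\<^sup>2)"
proof -
  let ?w = "\<lambda>k. (cmod (Linv_coeff b g k))\<^sup>2"
  have "(\<Sum>k<n. f k) = (\<Sum>k<m. f k) + (\<Sum>k=m..<n. f k)" for f :: "nat \<Rightarrow> complex"
    using sum.atLeastLessThan_concat[of 0 m n f] assms(3) by (simp add: atLeast0LessThan)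
  then have "Linv_partial b g n x - Linv_partial b g m x
      = laguerre_sum b (Linv_coeff b g) {m..<n} x" for x
    unfolding Linv_partial_eq_laguerre_sum laguerre_sum_def by simp
  then have "(\<integral>\<^sup>+x. ennreal ((cmod (Linv_partial b g n x - Linv_partial b g m x))\<^sup>2) \<partial>mu b)
      = ennreal (\<Sum>k\<in>{m..<n}. ?w k)"
    using nn_integral_laguerre_sum[OF assms(1)] by simp
  also have "(\<Sum>k\<in>{m..<n}. ?w k) = (\<Sum>i<n - m. ?w (i + m))"
    using sum.shift_bounds_nat_ivl[of ?w 0 m "n - m"] assms(3) by (simp add: atLeast0LessThan)
  also have "\<dots> \<le> (\<Sum>i. ?w (i + m))"
    using summable_Linv_coeff_square[OF assms(1,2)]
    by (intro sum_le_suminf) (auto intro: summable_ignore_initial_segment)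
  finally show ?thesis
    by (simp add: ennreal_leI)
qed

text \<open>Linv is defined by Hilbert choice; this shows that the chosen function exists, so Linv b g
  really is the L^2 limit of the partial sums.\<close>
lemma Linv_L2_limit:
  assumes "b > -1" and "g \<in> L2 (mu b)"
  shows "Linv b g \<in> borel_measurable (mu b)"
    and "(\<lambda>n. \<integral>\<^sup>+x. ennreal ((cmod (Linv_partial b g n x - Linv b g x))\<^sup>2) \<partial>mu b) \<longlonglongrightarrow> 0"
proof -
  have "\<exists>h \<in> borel_measurable (mu b).
      (\<lambda>n. \<integral>\<^sup>+x. ennreal ((cmod (Linv_partial b g n x - h x))\<^sup>2) \<partial>mu b) \<longlonglongrightarrow> 0"
  proof (rule L2_Cauchy_has_limit[where T="\<lambda>m. \<Sum>i. (cmod (Linv_coeff b g (i + m)))\<^sup>2"])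
    show "(\<lambda>m. \<Sum>i. (cmod (Linv_coeff b g (i + m)))\<^sup>2) \<longlonglongrightarrow> 0"
      using suminf_exist_split[OF _ summable_Linv_coeff_square[OF assms]] by (intro LIMSEQ_I) auto
  qed (auto intro: nn_integral_Linv_partial_diff[OF assms])
  then have "\<exists>h. h \<in> borel_measurable (mu b) \<and>
      (\<lambda>n. \<integral>\<^sup>+x. ennreal ((cmod (Linv_partial b g n x - h x))\<^sup>2) \<partial>mu b) \<longlonglongrightarrow> 0"
    by blast
  then have "Linv b g \<in> borel_measurable (mu b) \<and>
      (\<lambda>n. \<integral>\<^sup>+x. ennreal ((cmod (Linv_partial b g n x - Linv b g x))\<^sup>2) \<partial>mu b) \<longlonglongrightarrow> 0"
    unfolding Linv_def by (rule someI_ex)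
  then show "Linv b g \<in> borel_measurable (mu b)"
    and "(\<lambda>n. \<integral>\<^sup>+x. ennreal ((cmod (Linv_partial b g n x - Linv b g x))\<^sup>2) \<partial>mu b) \<longlonglongrightarrow> 0"
    by auto
qed

lemma nn_integral_Linv_partial_div_square:
  assumes "b > 0" and "g \<in> L2 (mu b)"
  shows "(\<integral>\<^sup>+x. ennreal ((cmod (Linv_partial b g n x))\<^sup>2 / x\<^sup>2) \<partial>mu b)
           \<le> ennreal ((\<integral>x. (cmod (g x))\<^sup>2 \<partial>mu b) / b\<^sup>2)"
proof -
  have "b > -1"
    using assms(1) by simp
  have "(\<integral>\<^sup>+x. ennreal ((cmod (Linv_partial b g n x))\<^sup>2 / x\<^sup>2) \<partial>mu b)
      \<le> ennreal ((\<Sum>k<n. (4 * real k + 2 * b + 2) * (cmod (Linv_coeff b g k))\<^sup>2) / b\<^sup>2)"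
    unfolding Linv_partial_eq_laguerre_sum using assms(1)
    by (rule nn_integral_laguerre_sum_div_square) simp
  also have "\<dots> = ennreal ((\<Sum>k<n. (cmod (lag_coeff b g k))\<^sup>2) / b\<^sup>2)"
    by (simp add: Linv_coeff_square[OF \<open>b > -1\<close>])
  also have "\<dots> \<le> ennreal ((\<integral>x. (cmod (g x))\<^sup>2 \<partial>mu b) / b\<^sup>2)"
    using bessel_inequality[OF \<open>b > -1\<close> assms(2), of "{..<n}"]
    by (intro ennreal_leI divide_right_mono) auto
  finally show ?thesis .
qed

lemma nn_integral_Linv_div_square:
  assumes "b > 0" and "g \<in> L2 (mu b)"
  shows "(\<integral>\<^sup>+x. ennreal ((cmod (Linv b g x))\<^sup>2 / x\<^sup>2) \<partial>mu b)
           \<le> ennreal ((\<integral>x. (cmod (g x))\<^sup>2 \<partial>mu b) / b\<^sup>2)"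
proof -
  have "b > -1"
    using assms(1) by simp
  note limit = Linv_L2_limit[OF this assms(2)]
  have [measurable]: "Linv b g \<in> borel_measurable borel"
    using limit(1) by simp
  obtain r where r: "AE x in mu b. (\<lambda>i. Linv_partial b g (r i) x) \<longlonglongrightarrow> Linv b g x"
    using L2_tendsto_imp_AE_subseq[OF _ _ limit(2)] by auto
  show ?thesis
  proof (rule nn_integral_le_if_AE_tendsto)
    show "AE x in mu b. (\<lambda>i. ennreal ((cmod (Linv_partial b g (r i) x))\<^sup>2 / x\<^sup>2))
        \<longlonglongrightarrow> ennreal ((cmod (Linv b g x))\<^sup>2 / x\<^sup>2)"
      using r
    proof eventually_elim
      case (elim x)
      then show ?case
        by (cases "x = 0") (auto intro!: tendsto_intros)
    qed
  qed (simp_all add: nn_integral_Linv_partial_div_square[OF assms])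
qed

lemma nn_integral_div_powr:
  assumes [measurable]: "f \<in> borel_measurable borel"
  shows "(\<integral>\<^sup>+x. ennreal ((cmod (f x / complex_of_real (x powr t)))\<^sup>2) \<partial>mu (\<alpha> + t))
           = (\<integral>\<^sup>+x. ennreal ((cmod (f x))\<^sup>2) \<partial>mu \<alpha>)"
proof (subst nn_integral_mu_add)
  show "(\<integral>\<^sup>+x. ennreal (x powr (2 * t)) * ennreal ((cmod (f x / complex_of_real (x powr t)))\<^sup>2) \<partial>mu \<alpha>)
      = (\<integral>\<^sup>+x. ennreal ((cmod (f x))\<^sup>2) \<partial>mu \<alpha>)"
  proof (rule nn_integral_cong_AE, use AE_mu_pos in eventually_elim)
    case (elim x)
    then have "(x powr t)\<^sup>2 = x powr (2 * t)"
      using powr_power[of x t 2] by simp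
    with elim show ?case
      by (simp add: norm_divide power_divide flip: ennreal_mult)
  qed
qed measurable

lemma L2_div_powr:
  assumes "f \<in> L2 (mu \<alpha>)"
  shows "(\<lambda>y. f y / complex_of_real (y powr t)) \<in> L2 (mu (\<alpha> + t))"
proof -
  have [measurable]: "f \<in> borel_measurable borel"
    using L2_borel_measurable[OF assms] by simp
  have "(\<lambda>y. f y / complex_of_real (y powr t)) \<in> borel_measurable borel"
    by measurable
  then show ?thesis
    using assms nn_integral_div_powr[where f=f and t=t and \<alpha>=\<alpha>] by (simp add: L2_def)
qed

lemma nn_integral_powr_mult_Top:
  assumes [measurable]: "Linv (\<alpha> + t) g \<in> borel_measurable borel"
  shows "(\<integral>\<^sup>+x. ennreal ((cmod (complex_of_real (c * x powr t) * Top (\<alpha> + t) g x))\<^sup>2) \<partial>mu \<alpha>)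
           = ennreal (c\<^sup>2) * (\<integral>\<^sup>+x. ennreal ((cmod (Linv (\<alpha> + t) g x))\<^sup>2 / x\<^sup>2) \<partial>mu (\<alpha> + t))"
proof -
  have "ennreal (c\<^sup>2) * (\<integral>\<^sup>+x. ennreal ((cmod (Linv (\<alpha> + t) g x))\<^sup>2 / x\<^sup>2) \<partial>mu (\<alpha> + t))
      = (\<integral>\<^sup>+x. ennreal (x powr (2 * t))
            * (ennreal (c\<^sup>2) * ennreal ((cmod (Linv (\<alpha> + t) g x))\<^sup>2 / x\<^sup>2)) \<partial>mu \<alpha>)"
    by (subst nn_integral_cmult[symmetric]) (simp_all add: nn_integral_mu_add)
  also have "\<dots> = (\<integral>\<^sup>+x. ennreal ((cmod (complex_of_real (c * x powr t) * Top (\<alpha> + t) g x))\<^sup>2) \<partial>mu \<alpha>)"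
  proof (rule nn_integral_cong_AE, use AE_mu_pos in eventually_elim)
    case (elim x)
    then have "(x powr t)\<^sup>2 = x powr (2 * t)"
      using powr_power[of x t 2] by simp
    with elim show ?case
      by (simp add: Top_def norm_mult norm_divide power_mult_distrib power_divide mult_ac
          flip: ennreal_mult)
  qed
  finally show ?thesis ..
qed

lemma nn_integral_powr_mult_Top_le:
  assumes "\<alpha> + t > 0" and f: "f \<in> L2 (mu \<alpha>)"
  shows "(\<integral>\<^sup>+x. ennreal ((cmod (complex_of_real (c * x powr t)
              * Top (\<alpha> + t) (\<lambda>y. f y / complex_of_real (y powr t)) x))\<^sup>2) \<partial>mu \<alpha>)
           \<le> ennreal (c\<^sup>2 / (\<alpha> + t)\<^sup>2) * (\<integral>\<^sup>+x. ennreal ((cmod (f x))\<^sup>2) \<partial>mu \<alpha>)"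
proof -
  define b where "b = \<alpha> + t"
  define g where "g = (\<lambda>y. f y / complex_of_real (y powr t))"
  have g: "g \<in> L2 (mu b)"
    unfolding g_def b_def using f by (rule L2_div_powr)
  have [measurable]: "Linv b g \<in> borel_measurable borel"
    using Linv_L2_limit(1)[OF _ g] assms(1) by (simp add: b_def)
  have "(\<integral>\<^sup>+x. ennreal ((cmod (complex_of_real (c * x powr t) * Top b g x))\<^sup>2) \<partial>mu \<alpha>)
      = ennreal (c\<^sup>2) * (\<integral>\<^sup>+x. ennreal ((cmod (Linv b g x))\<^sup>2 / x\<^sup>2) \<partial>mu b)"
    unfolding b_def by (rule nn_integral_powr_mult_Top) (simp add: b_def[symmetric])
  also have "\<dots> \<le> ennreal (c\<^sup>2) * ennreal ((\<integral>x. (cmod (g x))\<^sup>2 \<partial>mu b) / b\<^sup>2)"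
    using nn_integral_Linv_div_square[OF _ g] assms(1) by (intro mult_left_mono) (simp_all add: b_def)
  also have "\<dots> = ennreal (c\<^sup>2 / b\<^sup>2) * ennreal (\<integral>x. (cmod (g x))\<^sup>2 \<partial>mu b)"
    by (simp add: ennreal_mult[symmetric] integral_nonneg_AE)
  also have "\<dots> = ennreal (c\<^sup>2 / b\<^sup>2) * (\<integral>\<^sup>+x. ennreal ((cmod (f x))\<^sup>2) \<partial>mu \<alpha>)"
    using nn_integral_L2_eq[OF g] nn_integral_div_powr[OF L2_borel_measurable[OF f, simplified]]
    by (simp add: g_def b_def)
  finally show ?thesis
    by (simp add: b_def g_def)
qed

lemma square_div_square_le_4:
  assumes "\<alpha> \<ge> -1/2" and "a \<ge> 1" and "j \<ge> 1"
  shows "\<alpha> + a * real j > 0" and "(real j)\<^sup>2 / (\<alpha> + a * real j)\<^sup>2 \<le> 4"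
proof -
  define b where "b = \<alpha> + a * real j"
  have "real j \<le> a * real j" and "real j \<ge> 1"
    using mult_right_mono[OF \<open>a \<ge> 1\<close>, of "real j"] \<open>j \<ge> 1\<close> by simp_all
  moreover have "2 * b = 2 * \<alpha> + 2 * (a * real j)"
    by (simp add: b_def)
  ultimately have "real j \<le> 2 * b"
    using assms(1) by linarith
  then have "b > 0" and "(real j)\<^sup>2 \<le> (2 * b)\<^sup>2"
    using \<open>real j \<ge> 1\<close> by (linarith, intro power_mono) simp_all
  then show "\<alpha> + a * real j > 0" and "(real j)\<^sup>2 / (\<alpha> + a * real j)\<^sup>2 \<le> 4"
    by (simp_all add: b_def[symmetric] field_simps power_mult_distrib)
qed

theorem mainTheorem11:
  fixes \<alpha> a :: real
  assumes "\<alpha> \<ge> -1/2" and "a \<ge> 1"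
  shows "\<exists>C::real. \<forall>j::nat. j \<ge> 1 \<longrightarrow> (\<forall>f \<in> L2 (mu \<alpha>).
     (\<integral>\<^sup>+ x. ennreal ((cmod (complex_of_real (real j * x powr (a * real j))
          * Top (\<alpha> + a * real j) (\<lambda>y. f y / complex_of_real (y powr (a * real j))) x))\<^sup>2) \<partial>mu \<alpha>)
     \<le> ennreal C * (\<integral>\<^sup>+ x. ennreal ((cmod (f x))\<^sup>2) \<partial>mu \<alpha>))"
proof (intro exI[of _ 4] allI impI ballI)
  fix j :: nat and f
  assume "j \<ge> 1" and f: "f \<in> L2 (mu \<alpha>)"
  note bounds = square_div_square_le_4[OF assms \<open>j \<ge> 1\<close>]
  have "(\<integral>\<^sup>+ x. ennreal ((cmod (complex_of_real (real j * x powr (a * real j))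
          * Top (\<alpha> + a * real j) (\<lambda>y. f y / complex_of_real (y powr (a * real j))) x))\<^sup>2) \<partial>mu \<alpha>)
      \<le> ennreal ((real j)\<^sup>2 / (\<alpha> + a * real j)\<^sup>2) * (\<integral>\<^sup>+ x. ennreal ((cmod (f x))\<^sup>2) \<partial>mu \<alpha>)"
    using bounds(1) f by (rule nn_integral_powr_mult_Top_le)
  also have "\<dots> \<le> ennreal 4 * (\<integral>\<^sup>+ x. ennreal ((cmod (f x))\<^sup>2) \<partial>mu \<alpha>)"
    using bounds(2) by (intro mult_right_mono ennreal_leI) simp_all
  finally show "(\<integral>\<^sup>+ x. ennreal ((cmod (complex_of_real (real j * x powr (a * real j))
          * Top (\<alpha> + a * real j) (\<lambda>y. f y / complex_of_real (y powr (a * real j))) x))\<^sup>2) \<partial>mu \<alpha>)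
     \<le> ennreal 4 * (\<integral>\<^sup>+ x. ennreal ((cmod (f x))\<^sup>2) \<partial>mu \<alpha>)" .
qed

end
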